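(* Let $p\in(\frac12,1)$ and let $W_p^*$ and $W_{1/2}^*$ both start in $0$. For $N\ge2$ and a path $w$ of either chain, set $$M_N(w):=\max_{1\le k\le N}\ \max_{\tau_k(w)\le n<\tau_{k+1}(w)}\big(\log_N k-\log_N w(n)\big).$$ Then $M_N(W_p^* )$ is stochastically not larger than $M_N(W_{1/2}^* )$, i.e. $\mathbb P(M_N(W_p^* )>x)\le\mathbb P(M_N(W_{1/2}^* )>x)$ for all $x\in\mathbb R$.
   Context: For $p\in(\frac12,1)$ and $r:=\frac{1-p}{p}$, $W_p^*$ is the Markov chain on $\mathbb N_0$ with $\mathbb P(W_p^*(1)=1\mid W_p^*(0)=0)=1$ and, for $k\in\mathbb N$, up-probability $\frac{1-r^{k+1}}{(1+r)(1-r^k)}$ from $k$ to $k+1$ and the complementary probability from $k$ to $k-1$. $W_{1/2}^*$ is the Markov chain on $\mathbb N_0$ with $\mathbb P(W^*_{1/2}(1)=1\mid W^*_{1/2}(0)=0)=1$ and $\mathbb P(W^*_{1/2}(1)=k\pm1\mid W^*_{1/2}(0)=k)=\frac12\cdot\frac{k\pm1}{k}$ for $k\in\mathbb N$. For a path $w$, $\tau_k(w):=\min\{n\in\mathbb N_0: w(n)=k\}$. $\log_N x=\log x/\log N$. *)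

theory Defs
  imports "HOL-Probability.Probability"
begin

definition up_p :: "real \<Rightarrow> nat \<Rightarrow> real" where
  "up_p p k = (let r = (1 - p) / p in (1 - r ^ (k + 1)) / ((1 + r) * (1 - r ^ k)))"

definition up_half :: "nat \<Rightarrow> real" where
  "up_half k = (real k + 1) / (2 * real k)"

text \<open>One step of a nearest-neighbour chain on the naturals driven by a uniform
  variable u on [0,1]: from 0 go to 1 surely; from k \<ge> 1 go up iff u < up k
  (which happens with probability up k), otherwise down.\<close>

definition step :: "(nat \<Rightarrow> real) \<Rightarrow> nat \<Rightarrow> real \<Rightarrow> nat" where
  "step up k u = (if k = 0 then 1 else if u < up k then k + 1 else k - 1)"

primrec chain_path :: "(nat \<Rightarrow> real) \<Rightarrow> real stream \<Rightarrow> nat \<Rightarrow> nat" where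
  "chain_path up us 0 = 0"
| "chain_path up us (Suc n) = step up (chain_path up us n) (us !! n)"

definition noise :: "real stream measure" where
  "noise = stream_space (uniform_measure lborel {0..1})"

definition tau :: "nat \<Rightarrow> (nat \<Rightarrow> nat) \<Rightarrow> enat" where
  "tau k w = (if \<exists>n. w n = k then enat (LEAST n. w n = k) else \<infinity>)"

definition M_N :: "nat \<Rightarrow> (nat \<Rightarrow> nat) \<Rightarrow> real" where
  "M_N N w = Sup {log N (real k) - log N (real (w n)) | k n.
                   1 \<le> k \<and> k \<le> N \<and> tau k w \<le> enat n \<and> enat n < tau (k + 1) w}"

end

theory Submission
  imports Defs
begin

text \<open>Both chains are Doob h-transforms of nearest-neighbour walks: of the walk with up-probability p
  by h n = 1 - r^n, and of the simple symmetric walk by h n = n. In terms of the position w and the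
  running maximum S, the event M_N > x says that at some time w drops to at most a threshold
  \<beta> S \<le> S that depends only on S (for 1 \<le> S \<le> N). The probability of avoiding this forever is the
  product of gambler's-ruin probabilities: first reach S + 1 from w before \<beta> S, then for every level
  k = S + 1, ..., N reach k + 1 from k before \<beta> k. This product is harmonic for the pair
  (position, running maximum), so a supermartingale argument bounds P(M_N > x) from above for W_p^*,
  and together with a Lyapunov function forcing W_{1/2}^* above level N also from below for W_{1/2}^*.
  It remains to compare the factors: for j = k - \<beta> k the symmetric one is j (k + 1) / ((j + 1) k),
  and the one for p exceeds it by the factor (a_j / a_{j+1}) / (a_k / a_{k+1}) \<ge> 1, where
  a_n = (1 + r + ... + r^(n-1)) / n is log-convex in n by the AM-GM inequality.\<close>

section \<open>Chains driven by i.i.d. noise\<close>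

primrec traj :: "('s \<Rightarrow> 'a \<Rightarrow> 's) \<Rightarrow> 's \<Rightarrow> 'a stream \<Rightarrow> nat \<Rightarrow> 's" where
  "traj f s \<omega> 0 = s"
| "traj f s \<omega> (Suc n) = traj f (f s (shd \<omega>)) (stl \<omega>) n"

lemma traj_Suc_last: "traj f s \<omega> (Suc n) = f (traj f s \<omega> n) (\<omega> !! n)"
  by (induction n arbitrary: s \<omega>) auto

context prob_space
begin

lemma measurable_traj:
  fixes f :: "'s::countable \<Rightarrow> 'a \<Rightarrow> 's"
  assumes f: "\<And>s. f s \<in> M \<rightarrow>\<^sub>M count_space UNIV"
  shows "(\<lambda>\<omega>. traj f s \<omega> n) \<in> stream_space M \<rightarrow>\<^sub>M count_space UNIV"
proof (induction n arbitrary: s)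
  case 0
  then show ?case by simp
next
  case (Suc n)
  have "(\<lambda>\<omega>. f s (shd \<omega>)) \<in> stream_space M \<rightarrow>\<^sub>M count_space UNIV"
    using f measurable_shd by (rule measurable_compose[rotated])
  then have "(\<lambda>\<omega>. traj f (f s (shd \<omega>)) (stl \<omega>) n) \<in> stream_space M \<rightarrow>\<^sub>M count_space UNIV"
    by (rule measurable_compose_countable'[where f="\<lambda>i \<omega>. traj f i (stl \<omega>) n" and I=UNIV, rotated])
      (use Suc measurable_stl in \<open>auto intro: measurable_compose\<close>)
  then show ?case by simp
qed

lemma pred_traj:
  fixes f :: "'s::countable \<Rightarrow> 'a \<Rightarrow> 's"
  assumes "\<And>s. f s \<in> M \<rightarrow>\<^sub>M count_space UNIV"
  shows "Measurable.pred (stream_space M) (\<lambda>\<omega>. P (traj f s \<omega> n))"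
  using measurable_traj[OF assms] by (rule measurable_compose) simp

context
  fixes f :: "'s::countable \<Rightarrow> 'a \<Rightarrow> 's" and Inv :: "'s \<Rightarrow> bool"
  assumes f: "\<And>s. f s \<in> M \<rightarrow>\<^sub>M count_space UNIV"
    and inv: "\<And>s u. Inv s \<Longrightarrow> Inv (f s u)"
begin

lemmas [measurable] = pred_traj[OF f]

lemma borel_measurable_step [measurable]: "(\<lambda>u. g (f s u)) \<in> borel_measurable M"
  for g :: "'s \<Rightarrow> ennreal"
  using f by (rule measurable_compose) simp

lemma hit_within_le_superharmonic:
  fixes g :: "'s \<Rightarrow> ennreal"
  assumes target: "\<And>s. Inv s \<Longrightarrow> A s \<Longrightarrow> 1 \<le> g s"
    and superharmonic: "\<And>s. Inv s \<Longrightarrow> \<not> A s \<Longrightarrow> (\<integral>\<^sup>+u. g (f s u) \<partial>M) \<le> g s"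
    and "Inv s"
  shows "emeasure (stream_space M) {\<omega> \<in> space (stream_space M). \<exists>m<n. A (traj f s \<omega> m)} \<le> g s"
  using \<open>Inv s\<close>
proof (induction n arbitrary: s)
  case (Suc n)
  interpret S: prob_space "stream_space M"
    by (rule prob_space_stream_space)
  let ?E = "\<lambda>n s. {\<omega> \<in> space (stream_space M). \<exists>m<n. A (traj f s \<omega> m)}"
  show ?case
  proof (cases "A s")
    case True
    then show ?thesis
      using target[OF Suc.prems] S.emeasure_le_1 order_trans by blast
  next
    case False
    have "emeasure (stream_space M) (?E (Suc n) s) =
        (\<integral>\<^sup>+t. emeasure (stream_space M) {\<omega> \<in> space (stream_space M). t ## \<omega> \<in> ?E (Suc n) s} \<partial>M)"
      by (rule emeasure_stream_space) simp
    also have "\<dots> = (\<integral>\<^sup>+t. emeasure (stream_space M) (?E n (f s t)) \<partial>M)"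
      using False by (intro nn_integral_cong arg_cong[where f="emeasure _"])
        (auto simp: stream_space_Stream Ex_less_Suc2)
    also have "\<dots> \<le> (\<integral>\<^sup>+t. g (f s t) \<partial>M)"
      by (intro nn_integral_mono Suc.IH inv Suc.prems)
    also have "\<dots> \<le> g s"
      by (rule superharmonic[OF Suc.prems False])
    finally show ?thesis .
  qed
qed simp

lemma hit_prob_le_superharmonic:
  fixes g :: "'s \<Rightarrow> ennreal"
  assumes "\<And>s. Inv s \<Longrightarrow> A s \<Longrightarrow> 1 \<le> g s"
    and "\<And>s. Inv s \<Longrightarrow> \<not> A s \<Longrightarrow> (\<integral>\<^sup>+u. g (f s u) \<partial>M) \<le> g s"
    and "Inv s"
  shows "emeasure (stream_space M) {\<omega> \<in> space (stream_space M). \<exists>n. A (traj f s \<omega> n)} \<le> g s"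
proof -
  let ?E = "\<lambda>n. {\<omega> \<in> space (stream_space M). \<exists>m<n. A (traj f s \<omega> m)}"
  have "{\<omega> \<in> space (stream_space M). \<exists>n. A (traj f s \<omega> n)} = (\<Union>n. ?E n)"
    by auto
  moreover have "emeasure (stream_space M) (\<Union>n. ?E n) = (SUP n. emeasure (stream_space M) (?E n))"
    using less_le_trans by (intro SUP_emeasure_incseq[symmetric]) (fastforce simp: incseq_def)+
  ultimately show ?thesis
    using hit_within_le_superharmonic[OF assms] by (auto intro: SUP_least)
qed

lemma avoid_within_le_superharmonic:
  fixes Q \<phi> :: "'s \<Rightarrow> real"
  assumes nonneg: "\<And>s. Inv s \<Longrightarrow> 0 \<le> Q s \<and> 0 \<le> \<phi> s"
    and covers: "\<And>s. Inv s \<Longrightarrow> 1 \<le> Q s + \<phi> s"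
    and \<theta>: "0 \<le> \<theta>"
    and superharmonic: "\<And>s. Inv s \<Longrightarrow> \<not> B s \<Longrightarrow>
      (\<integral>\<^sup>+u. ennreal (Q (f s u)) \<partial>M) \<le> ennreal (Q s) \<and>
      (\<integral>\<^sup>+u. ennreal (\<phi> (f s u)) \<partial>M) \<le> ennreal (\<theta> * \<phi> s)"
    and "Inv s"
  shows "emeasure (stream_space M) {\<omega> \<in> space (stream_space M). \<forall>m<n. \<not> B (traj f s \<omega> m)}
    \<le> ennreal (Q s + \<phi> s * \<theta> ^ n)"
  using \<open>Inv s\<close>
proof (induction n arbitrary: s)
  case 0
  interpret S: prob_space "stream_space M"
    by (rule prob_space_stream_space)
  have "1 \<le> ennreal (Q s + \<phi> s * \<theta> ^ 0)"
    using covers[OF 0] by (simp add: ennreal_ge_1 del: ennreal_plus)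
  then show ?case
    using S.emeasure_le_1 order_trans by blast
next
  case (Suc n)
  let ?F = "\<lambda>n s. {\<omega> \<in> space (stream_space M). \<forall>m<n. \<not> B (traj f s \<omega> m)}"
  show ?case
  proof (cases "B s")
    case False
    have "emeasure (stream_space M) (?F (Suc n) s) =
        (\<integral>\<^sup>+t. emeasure (stream_space M) {\<omega> \<in> space (stream_space M). t ## \<omega> \<in> ?F (Suc n) s} \<partial>M)"
      by (rule emeasure_stream_space) simp
    also have "\<dots> = (\<integral>\<^sup>+t. emeasure (stream_space M) (?F n (f s t)) \<partial>M)"
      using False by (intro nn_integral_cong arg_cong[where f="emeasure _"])
        (auto simp: stream_space_Stream All_less_Suc2)
    also have "\<dots> \<le> (\<integral>\<^sup>+t. ennreal (Q (f s t)) + ennreal (\<phi> (f s t)) * ennreal (\<theta> ^ n) \<partial>M)"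
      using Suc.IH[OF inv[OF Suc.prems]] nonneg[OF inv[OF Suc.prems]] \<theta>
      by (intro nn_integral_mono) (simp add: ennreal_mult)
    also have "\<dots> = (\<integral>\<^sup>+t. ennreal (Q (f s t)) \<partial>M) + (\<integral>\<^sup>+t. ennreal (\<phi> (f s t)) \<partial>M) * ennreal (\<theta> ^ n)"
      by (subst nn_integral_add) (auto simp: nn_integral_multc)
    also have "\<dots> \<le> ennreal (Q s) + ennreal (\<theta> * \<phi> s) * ennreal (\<theta> ^ n)"
      using superharmonic[OF Suc.prems False] by (intro add_mono mult_right_mono) auto
    also have "\<dots> = ennreal (Q s + \<phi> s * \<theta> ^ Suc n)"
      using nonneg[OF Suc.prems] \<theta> by (simp add: ennreal_mult[symmetric] mult_ac)
    finally show ?thesis .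
  qed (simp add: All_less_Suc2)
qed

lemma avoid_prob_le_superharmonic:
  fixes Q \<phi> :: "'s \<Rightarrow> real"
  assumes nonneg: "\<And>s. Inv s \<Longrightarrow> 0 \<le> Q s \<and> 0 \<le> \<phi> s"
    and "\<And>s. Inv s \<Longrightarrow> 1 \<le> Q s + \<phi> s"
    and \<theta>: "0 \<le> \<theta>" "\<theta> < 1"
    and "\<And>s. Inv s \<Longrightarrow> \<not> B s \<Longrightarrow>
      (\<integral>\<^sup>+u. ennreal (Q (f s u)) \<partial>M) \<le> ennreal (Q s) \<and>
      (\<integral>\<^sup>+u. ennreal (\<phi> (f s u)) \<partial>M) \<le> ennreal (\<theta> * \<phi> s)"
    and "Inv s"
  shows "measure (stream_space M) {\<omega> \<in> space (stream_space M). \<forall>n. \<not> B (traj f s \<omega> n)} \<le> Q s"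
proof -
  interpret S: prob_space "stream_space M"
    by (rule prob_space_stream_space)
  let ?F = "{\<omega> \<in> space (stream_space M). \<forall>n. \<not> B (traj f s \<omega> n)}"
  have "measure (stream_space M) ?F \<le> Q s + \<phi> s * \<theta> ^ n" for n
  proof -
    have "emeasure (stream_space M) ?F
        \<le> emeasure (stream_space M) {\<omega> \<in> space (stream_space M). \<forall>m<n. \<not> B (traj f s \<omega> m)}"
      by (rule emeasure_mono) auto
    also have "\<dots> \<le> ennreal (Q s + \<phi> s * \<theta> ^ n)"
      using avoid_within_le_superharmonic[OF assms(1,2,3) assms(5,6)] .
    finally show ?thesis
      using nonneg[OF \<open>Inv s\<close>] \<theta> by (simp add: S.emeasure_eq_measure del: ennreal_plus)
  qed
  moreover have "(\<lambda>n. Q s + \<phi> s * \<theta> ^ n) \<longlonglongrightarrow> Q s + \<phi> s * 0"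
    using \<theta> by (intro tendsto_intros LIMSEQ_power_zero) auto
  ultimately show ?thesis
    by (intro LIMSEQ_le_const) auto
qed

end

end

section \<open>The nearest-neighbour chain together with its running maximum\<close>

abbreviation unif :: "real measure" where
  "unif \<equiv> uniform_measure lborel {0..1}"

interpretation unif: prob_space unif
  by (intro prob_space_uniform_measure) auto

interpretation unif_streams: prob_space "stream_space unif"
  by (rule unif.prob_space_stream_space)

lemma nn_integral_unif_threshold:
  assumes "0 \<le> a" "a \<le> 1"
  shows "(\<integral>\<^sup>+u. f (if u < a then X else Y) \<partial>unif) = ennreal a * f X + ennreal (1 - a) * f Y"
proof -
  have "(\<integral>\<^sup>+u. f (if u < a then X else Y) \<partial>unif) =
      (\<integral>\<^sup>+u. f X * indicator {..<a} u + f Y * indicator {a..} u \<partial>unif)"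
    by (intro nn_integral_cong) (auto split: split_indicator)
  also have "\<dots> = f X * emeasure unif {..<a} + f Y * emeasure unif {a..}"
    by (subst nn_integral_add) (auto simp: nn_integral_cmult_indicator)
  also have "emeasure unif {..<a} = ennreal a"
  proof -
    have "{0..1} \<inter> {..<a} = {0..<a}"
      using assms by auto
    then show ?thesis
      using assms by (simp add: divide_ennreal_def)
  qed
  also have "emeasure unif {a..} = ennreal (1 - a)"
  proof -
    have "{0..1} \<inter> {a..} = {a..1}"
      using assms by auto
    then show ?thesis
      using assms by (simp add: divide_ennreal_def)
  qed
  finally show ?thesis
    by (simp only: mult.commute)
qed

definition step_with_max :: "(nat \<Rightarrow> real) \<Rightarrow> nat \<times> nat \<Rightarrow> real \<Rightarrow> nat \<times> nat" where
  "step_with_max up s u = (step up (fst s) u, max (snd s) (step up (fst s) u))"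

lemma measurable_step_with_max: "step_with_max up s \<in> unif \<rightarrow>\<^sub>M count_space UNIV"
proof -
  have "step up (fst s) \<in> unif \<rightarrow>\<^sub>M count_space UNIV"
    unfolding step_def by (auto intro!: measurable_If simp: pred_def)
  then show ?thesis
    unfolding step_with_max_def by measurable
qed

lemma step_with_max_le: "fst (step_with_max up s u) \<le> snd (step_with_max up s u)"
  by (simp add: step_with_max_def)

fun step_mean :: "(nat \<Rightarrow> real) \<Rightarrow> (nat \<times> nat \<Rightarrow> real) \<Rightarrow> nat \<times> nat \<Rightarrow> real" where
  "step_mean up F (w, S) = (if w = 0 then F (1, max S 1)
     else up w * F (w + 1, max S (w + 1)) + (1 - up w) * F (w - 1, max S (w - 1)))"

lemma nn_integral_step_with_max:
  assumes up: "\<And>k. 1 \<le> k \<Longrightarrow> 0 \<le> up k \<and> up k \<le> 1"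
    and F: "\<And>s. fst s \<le> snd s \<Longrightarrow> 0 \<le> F s"
  shows "(\<integral>\<^sup>+u. ennreal (F (step_with_max up s u)) \<partial>unif) = ennreal (step_mean up F s)"
proof (cases s)
  case (Pair w S)
  show ?thesis
  proof (cases "w = 0")
    case True
    then show ?thesis
      by (simp add: Pair step_with_max_def step_def unif.emeasure_space_1)
  next
    case False
    let ?up = "(w + 1, max S (w + 1))" and ?down = "(w - 1, max S (w - 1))"
    have "step_with_max up s u = (if u < up w then ?up else ?down)" for u
      using False by (simp add: Pair step_with_max_def step_def)
    then have "(\<integral>\<^sup>+u. ennreal (F (step_with_max up s u)) \<partial>unif) =
        (\<integral>\<^sup>+u. (\<lambda>s. ennreal (F s)) (if u < up w then ?up else ?down) \<partial>unif)"
      by simp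
    also have "\<dots> = ennreal (up w) * ennreal (F ?up) + ennreal (1 - up w) * ennreal (F ?down)"
      using up[of w] False by (intro nn_integral_unif_threshold) auto
    also have "\<dots> = ennreal (step_mean up F s)"
      using up[of w] False F[of ?up] F[of ?down] by (simp add: Pair ennreal_mult)
    finally show ?thesis .
  qed
qed

section \<open>Doob transforms of nearest-neighbour walks\<close>

text \<open>doob_up q h is the up-probability of the walk with up-probability q transformed by the harmonic
  function h. Since escape_prob h S b times h is affine in h, escape_prob h S b w is the
  probability that the transformed walk started at w reaches S + 1 before b.\<close>

definition doob_up :: "real \<Rightarrow> (nat \<Rightarrow> real) \<Rightarrow> nat \<Rightarrow> real" where
  "doob_up q h k = q * h (Suc k) / h k"

definition escape_prob :: "(nat \<Rightarrow> real) \<Rightarrow> nat \<Rightarrow> nat \<Rightarrow> nat \<Rightarrow> real" where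
  "escape_prob h S b w = (h w - h b) * h (Suc S) / ((h (Suc S) - h b) * h w)"

locale doob_walk =
  fixes q :: real and h :: "nat \<Rightarrow> real"
  assumes q_nonneg: "0 \<le> q" and q_le_1: "q \<le> 1"
    and h_0: "h 0 = 0" and h_strict_mono: "strict_mono h"
    and h_harmonic: "\<And>k. 1 \<le> k \<Longrightarrow> q * h (Suc k) + (1 - q) * h (k - 1) = h k"
begin

abbreviation up :: "nat \<Rightarrow> real" where
  "up \<equiv> doob_up q h"

lemma h_less_iff [simp]: "h m < h n \<longleftrightarrow> m < n"
  using h_strict_mono by (rule strict_mono_less)

lemma h_le_iff [simp]: "h m \<le> h n \<longleftrightarrow> m \<le> n"
  using h_strict_mono by (rule strict_mono_less_eq)

lemma h_eq_iff [simp]: "h m = h n \<longleftrightarrow> m = n"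
  using h_strict_mono by (rule strict_mono_eq)

lemma h_pos: "0 < k \<Longrightarrow> 0 < h k"
  using h_less_iff[of 0 k] by (simp add: h_0)

lemma h_nonneg: "0 \<le> h k"
  using h_le_iff[of 0 k] by (simp add: h_0)

lemma up_bounds:
  assumes "1 \<le> k"
  shows "0 \<le> up k \<and> up k \<le> 1"
proof -
  have "0 \<le> (1 - q) * h (k - 1)"
    using q_le_1 h_nonneg by simp
  then have "q * h (Suc k) \<le> h k"
    using h_harmonic[OF assms] by simp
  then show ?thesis
    using assms h_pos[of k] h_nonneg q_nonneg by (simp add: doob_up_def divide_le_eq_1)
qed

lemma up_1: "up 1 = 1"
  using h_harmonic[of 1] h_pos[of 1] by (simp add: doob_up_def h_0)

lemma escape_top: "b \<le> S \<Longrightarrow> escape_prob h S b (Suc S) = 1"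
  using h_pos[of "Suc S"] by (simp add: escape_prob_def)

lemma escape_floor: "escape_prob h S b b = 0"
  by (simp add: escape_prob_def)

lemma escape_bounds:
  assumes "b \<le> w" "w \<le> Suc S"
  shows "0 \<le> escape_prob h S b w \<and> escape_prob h S b w \<le> 1"
proof (cases "b = w")
  case False
  with assms have "b < w"
    by simp
  with assms have "0 \<le> h w - h b" "0 < (h (Suc S) - h b) * h w"
    using h_pos by auto
  moreover have "(h w - h b) * h (Suc S) \<le> (h (Suc S) - h b) * h w"
  proof -
    have "0 \<le> h b * (h (Suc S) - h w)"
      using assms h_nonneg by simp
    then show ?thesis
      by (simp add: algebra_simps)
  qed
  ultimately show ?thesis
    using h_nonneg by (simp add: escape_prob_def divide_le_eq_1)
qed (simp add: escape_floor)

lemma escape_harmonic: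
  assumes "1 \<le> w" "b < w" "w \<le> S"
  shows "up w * escape_prob h S b (Suc w) + (1 - up w) * escape_prob h S b (w - 1) = escape_prob h S b w"
proof (cases "w = 1")
  case True
  \<comment> \<open>escape_prob h S b 0 is a junk value (h 0 = 0), but its weight 1 - up 1 vanishes\<close>
  then show ?thesis
    using assms up_1 h_pos[of 1] h_pos[of 2] h_harmonic[of 1]
    by (simp add: escape_prob_def doob_up_def h_0 field_simps)
next
  case False
  define c where "c = h (Suc S) / (h (Suc S) - h b)"
  have escape: "escape_prob h S b v = (h v - h b) * c / h v" for v
    by (simp add: escape_prob_def c_def)
  have "up w * escape_prob h S b (Suc w) = q * (h (Suc w) - h b) * c / h w"
    using h_pos[of "Suc w"] by (simp add: escape doob_up_def)
  moreover have "(1 - up w) * escape_prob h S b (w - 1) = (1 - q) * (h (w - 1) - h b) * c / h w"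
  proof -
    have "1 - up w = (1 - q) * h (w - 1) / h w"
      using h_harmonic[OF assms(1)] h_pos[of w] assms by (simp add: doob_up_def field_simps)
    then show ?thesis
      using h_pos[of "w - 1"] assms False by (simp add: escape)
  qed
  moreover have "q * (h (Suc w) - h b) + (1 - q) * (h (w - 1) - h b) = h w - h b"
    using h_harmonic[OF assms(1)] by (simp add: algebra_simps)
  ultimately show ?thesis
    by (simp add: escape add_divide_distrib[symmetric] flip: distrib_right)
qed

end

section \<open>Falling below a threshold of the running maximum\<close>

text \<open>States are pairs (position, running maximum). Position 0 is treated like 1, which matches
  log_N 0 = log_N 1 = 0 in Isabelle; the chain leaves 0 at once anyway.\<close>

fun below_threshold :: "nat \<Rightarrow> (nat \<Rightarrow> nat) \<Rightarrow> nat \<times> nat \<Rightarrow> bool" where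
  "below_threshold N \<beta> (w, S) \<longleftrightarrow> 1 \<le> S \<and> S \<le> N \<and> max w 1 \<le> \<beta> S"

locale threshold_walk = doob_walk +
  fixes N :: nat and \<beta> :: "nat \<Rightarrow> nat"
  assumes N_pos: "1 \<le> N" and threshold_le: "\<And>S. \<beta> S \<le> S"
begin

abbreviation hits :: "nat \<times> nat \<Rightarrow> bool" where
  "hits \<equiv> below_threshold N \<beta>"

definition level_escape :: "nat \<Rightarrow> real" where
  "level_escape k = escape_prob h k (\<beta> k) k"

definition escape_beyond :: "nat \<Rightarrow> real" where
  "escape_beyond S = (\<Prod>k\<in>{S<..N}. level_escape k)"

fun survival :: "nat \<times> nat \<Rightarrow> real" where
  "survival (w, S) = (if N < S then 1 else if hits (w, S) then 0
     else escape_prob h S (\<beta> S) (max w 1) * escape_beyond S)"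

lemma level_escape_bounds: "0 \<le> level_escape k \<and> level_escape k \<le> 1"
  using threshold_le[of k] by (simp add: level_escape_def escape_bounds)

lemma level_escape_hits: "hits (k, k) \<Longrightarrow> level_escape k = 0"
  using threshold_le[of k] by (simp add: level_escape_def escape_floor)

lemma escape_beyond_bounds: "0 \<le> escape_beyond S \<and> escape_beyond S \<le> 1"
  using level_escape_bounds by (simp add: escape_beyond_def prod_nonneg prod_le_1)

lemma escape_beyond_Suc:
  assumes "S < N"
  shows "escape_beyond S = level_escape (Suc S) * escape_beyond (Suc S)"
proof -
  from assms have "{S<..N} = insert (Suc S) {Suc S<..N}"
    by auto
  then show ?thesis
    by (simp add: escape_beyond_def)
qed

lemma survival_bounds:
  assumes "fst s \<le> snd s"
  shows "0 \<le> survival s \<and> survival s \<le> 1"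
proof (cases s)
  case (Pair w S)
  then have "0 \<le> escape_prob h S (\<beta> S) (max w 1) \<and> escape_prob h S (\<beta> S) (max w 1) \<le> 1"
    if "\<not> hits s" "S \<le> N"
    using that assms threshold_le[of S] by (intro escape_bounds) (auto simp: max_def)
  then show ?thesis
    using escape_beyond_bounds[of S] by (auto simp: Pair mult_le_one)
qed

lemma survival_hits: "hits s \<Longrightarrow> survival s = 0"
  by (cases s) simp

lemma survival_start: "survival (0, 0) = (\<Prod>k\<in>{1..N}. level_escape k)"
proof -
  have "{0<..N} = {1..N}"
    by auto
  then show ?thesis
    using threshold_le[of 0] escape_top[of 0 0] by (simp add: escape_beyond_def)
qed

lemma survival_up:
  assumes "1 \<le> w" "w \<le> S" "S \<le> N" "\<beta> S < w"
  shows "survival (Suc w, max S (Suc w)) = escape_prob h S (\<beta> S) (Suc w) * escape_beyond S"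
proof (cases "w < S")
  case True
  then show ?thesis
    using assms by simp
next
  case False
  with assms have "w = S"
    by simp
  moreover have "survival (Suc S, Suc S) = escape_beyond S" if "S < N"
    using that level_escape_hits[of "Suc S"] by (auto simp: escape_beyond_Suc level_escape_def)
  ultimately show ?thesis
    using assms escape_top[of "\<beta> S" S] threshold_le[of S] by (cases "S = N") (auto simp: escape_beyond_def)
qed

lemma survival_down:
  assumes "2 \<le> w" "w \<le> S" "S \<le> N" "\<beta> S < w"
  shows "survival (w - 1, S) = escape_prob h S (\<beta> S) (w - 1) * escape_beyond S"
  using assms escape_floor[of S "\<beta> S"] by (cases "w - 1 = \<beta> S") auto

lemma survival_leave_zero: "survival (1, max S 1) = survival (0, S)"
proof (cases "S = 0")
  case True
  have "survival (1, 1) = escape_beyond 0"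
    using N_pos level_escape_hits[of 1] by (auto simp: escape_beyond_Suc level_escape_def)
  moreover have "survival (0, 0) = escape_beyond 0"
    using N_pos threshold_le[of 0] escape_top[of 0 0] by simp
  ultimately show ?thesis
    using True by simp
qed (simp add: max_absorb1)

lemma survival_harmonic:
  assumes "1 \<le> w" "w \<le> S" "S \<le> N" "\<beta> S < w"
  shows "up w * survival (Suc w, max S (Suc w)) + (1 - up w) * survival (w - 1, S) = survival (w, S)"
proof (cases "w = 1")
  case True
  then show ?thesis
    using assms survival_up escape_harmonic[of 1 "\<beta> S" S] by (simp add: up_1[unfolded One_nat_def])
next
  case False
  with assms have "2 \<le> w"
    by simp
  have "up w * survival (Suc w, max S (Suc w)) + (1 - up w) * survival (w - 1, S)
      = (up w * escape_prob h S (\<beta> S) (Suc w) + (1 - up w) * escape_prob h S (\<beta> S) (w - 1))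
        * escape_beyond S"
    using survival_up[OF assms] survival_down[OF \<open>2 \<le> w\<close> assms(2-4)]
    by (simp add: algebra_simps del: survival.simps)
  also have "\<dots> = survival (w, S)"
    using assms escape_harmonic[OF assms(1,4,2)] by simp
  finally show ?thesis .
qed

lemma step_mean_survival:
  assumes "fst s \<le> snd s" "\<not> hits s"
  shows "step_mean up survival s = survival s"
proof (cases s)
  case (Pair w S)
  consider "N < S" | "S \<le> N" "w = 0" | "S \<le> N" "1 \<le> w"
    by linarith
  then show ?thesis
  proof cases
    case 1
    then show ?thesis
      by (simp add: Pair less_max_iff_disj)
  next
    case 2
    then show ?thesis
      using survival_leave_zero[of S] by (simp add: Pair del: survival.simps)
  next
    case 3
    with assms have "w \<le> S" "\<beta> S < w"
      by (auto simp: Pair)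
    with 3 show ?thesis
      using survival_harmonic[of w S] by (simp add: Pair max_absorb1 del: survival.simps)
  qed
qed

lemma hit_emeasure_le:
  "emeasure (stream_space unif)
     {\<omega> \<in> space (stream_space unif). \<exists>n. hits (traj (step_with_max up) (0, 0) \<omega> n)}
   \<le> ennreal (1 - survival (0, 0))"
proof (rule unif.hit_prob_le_superharmonic
    [where Inv = "\<lambda>s. fst s \<le> snd s" and g = "\<lambda>s. ennreal (1 - survival s)"])
  fix s :: "nat \<times> nat"
  assume "fst s \<le> snd s" "\<not> hits s"
  have "(\<integral>\<^sup>+u. ennreal (1 - survival (step_with_max up s u)) \<partial>unif) =
      ennreal (step_mean up (\<lambda>s. 1 - survival s) s)"
    using survival_bounds up_bounds by (intro nn_integral_step_with_max) auto
  also have "step_mean up (\<lambda>s. 1 - survival s) s = 1 - step_mean up survival s"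
    by (cases s) (simp add: algebra_simps)
  finally show "(\<integral>\<^sup>+u. ennreal (1 - survival (step_with_max up s u)) \<partial>unif) \<le> ennreal (1 - survival s)"
    using step_mean_survival[OF \<open>fst s \<le> snd s\<close> \<open>\<not> hits s\<close>] by simp
qed (simp_all add: measurable_step_with_max step_with_max_le survival_hits)

theorem hit_prob_le:
  "measure (stream_space unif)
     {\<omega> \<in> space (stream_space unif). \<exists>n. hits (traj (step_with_max up) (0, 0) \<omega> n)}
   \<le> 1 - survival (0, 0)"
  using hit_emeasure_le survival_bounds[of "(0, 0)"] by (simp add: unif_streams.emeasure_eq_measure)

text \<open>A Lyapunov function: under a drift condition its expectation shrinks geometrically while the
  running maximum is at most N, so the chain exceeds N almost surely.\<close>

definition exit_distance :: "nat \<times> nat \<Rightarrow> real" where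
  "exit_distance s = (if snd s \<le> N then real N + 2 - real (fst s) else 0)"

lemma step_mean_exit_distance:
  assumes drift: "\<And>w. 1 \<le> w \<Longrightarrow> w \<le> N \<Longrightarrow> 1 + \<delta> \<le> 2 * up w" and "0 \<le> \<delta>"
    and "fst s \<le> snd s"
  shows "step_mean up exit_distance s \<le> (1 - \<delta> / (real N + 2)) * exit_distance s"
proof (cases s)
  case (Pair w S)
  have "\<delta> \<le> 1"
    using drift[of 1] N_pos up_1 by simp
  consider "N < S" | "S \<le> N" "w = 0" | "S \<le> N" "1 \<le> w"
    by linarith
  then show ?thesis
  proof cases
    case 1
    then show ?thesis
      by (simp add: Pair exit_distance_def)
  next
    case 2
    then show ?thesis
      using N_pos mult_right_mono[OF \<open>\<delta> \<le> 1\<close>, of "real N + 2"]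
      by (simp add: Pair exit_distance_def field_simps)
  next
    case 3
    with assms have "w \<le> S"
      by (simp add: Pair)
    have "step_mean up exit_distance s
        = up w * exit_distance (Suc w, max S (Suc w)) + (1 - up w) * exit_distance (w - 1, S)"
      using 3 \<open>w \<le> S\<close> by (simp add: Pair max_absorb1)
    also have "\<dots> \<le> up w * (real N + 1 - real w) + (1 - up w) * (real N + 3 - real w)"
      using up_bounds[OF 3(2)] 3 \<open>w \<le> S\<close>
      by (intro add_mono mult_left_mono) (auto simp: exit_distance_def of_nat_diff)
    also have "\<dots> \<le> real N + 2 - real w - \<delta>"
      using drift[OF 3(2)] 3 \<open>w \<le> S\<close> by (simp add: algebra_simps)
    also have "\<dots> \<le> real N + 2 - real w - \<delta> * ((real N + 2 - real w) / (real N + 2))"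
      using \<open>0 \<le> \<delta>\<close> mult_left_le[of "(real N + 2 - real w) / (real N + 2)" \<delta>] by simp
    also have "\<dots> = (1 - \<delta> / (real N + 2)) * exit_distance s"
      using 3 \<open>w \<le> S\<close> by (simp add: Pair exit_distance_def field_simps)
    finally show ?thesis .
  qed
qed

theorem avoid_prob_le:
  assumes "0 < \<delta>" and drift: "\<And>w. 1 \<le> w \<Longrightarrow> w \<le> N \<Longrightarrow> 1 + \<delta> \<le> 2 * up w"
  shows "measure (stream_space unif)
      {\<omega> \<in> space (stream_space unif). \<forall>n. \<not> hits (traj (step_with_max up) (0, 0) \<omega> n)}
    \<le> survival (0, 0)"
proof (rule unif.avoid_prob_le_superharmonic
    [where Inv = "\<lambda>s. fst s \<le> snd s" and \<phi> = exit_distance and \<theta> = "1 - \<delta> / (real N + 2)"])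
  have "\<delta> \<le> 1"
    using drift[of 1] N_pos up_1 by simp
  then show "0 \<le> 1 - \<delta> / (real N + 2)" "1 - \<delta> / (real N + 2) < 1"
    using \<open>0 < \<delta>\<close> by (auto simp: field_simps)
  fix s :: "nat \<times> nat"
  assume "fst s \<le> snd s"
  then show "0 \<le> survival s \<and> 0 \<le> exit_distance s"
    using survival_bounds by (auto simp: exit_distance_def)
  show "1 \<le> survival s + exit_distance s"
    using survival_bounds[OF \<open>fst s \<le> snd s\<close>] \<open>fst s \<le> snd s\<close>
    by (cases s) (auto simp: exit_distance_def)
  assume "\<not> hits s"
  have nonneg: "0 \<le> survival s' \<and> 0 \<le> exit_distance s'" if "fst s' \<le> snd s'" for s'
    using that survival_bounds by (auto simp: exit_distance_def)
  have "(\<integral>\<^sup>+u. ennreal (survival (step_with_max up s u)) \<partial>unif) = ennreal (survival s)"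
    using nonneg up_bounds step_mean_survival[OF \<open>fst s \<le> snd s\<close> \<open>\<not> hits s\<close>]
    by (subst nn_integral_step_with_max) auto
  moreover have "(\<integral>\<^sup>+u. ennreal (exit_distance (step_with_max up s u)) \<partial>unif)
      \<le> ennreal ((1 - \<delta> / (real N + 2)) * exit_distance s)"
    using nonneg up_bounds step_mean_exit_distance[OF drift _ \<open>fst s \<le> snd s\<close>] \<open>0 < \<delta>\<close>
    by (subst nn_integral_step_with_max) (auto intro: ennreal_leI)
  ultimately show "(\<integral>\<^sup>+u. ennreal (survival (step_with_max up s u)) \<partial>unif) \<le> ennreal (survival s) \<and>
      (\<integral>\<^sup>+u. ennreal (exit_distance (step_with_max up s u)) \<partial>unif)
      \<le> ennreal ((1 - \<delta> / (real N + 2)) * exit_distance s)"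
    by simp
qed (simp_all add: measurable_step_with_max step_with_max_le)

theorem hit_prob_ge:
  assumes "0 < \<delta>" and "\<And>w. 1 \<le> w \<Longrightarrow> w \<le> N \<Longrightarrow> 1 + \<delta> \<le> 2 * up w"
  shows "1 - survival (0, 0) \<le> measure (stream_space unif)
     {\<omega> \<in> space (stream_space unif). \<exists>n. hits (traj (step_with_max up) (0, 0) \<omega> n)}"
proof -
  note [measurable] = unif.pred_traj[OF measurable_step_with_max]
  have "{\<omega> \<in> space (stream_space unif). \<exists>n. hits (traj (step_with_max up) (0, 0) \<omega> n)}
      = space (stream_space unif) -
        {\<omega> \<in> space (stream_space unif). \<forall>n. \<not> hits (traj (step_with_max up) (0, 0) \<omega> n)}"
    by auto
  then show ?thesis
    using avoid_prob_le[OF assms] by (simp add: unif_streams.prob_compl)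
qed

end

section \<open>The event M_N > x\<close>

fun gap_exceeds :: "nat \<Rightarrow> real \<Rightarrow> nat \<times> nat \<Rightarrow> bool" where
  "gap_exceeds N x (w, S) \<longleftrightarrow> 1 \<le> S \<and> S \<le> N \<and> x < log N (real S) - log N (real w)"

definition running_max :: "(nat \<Rightarrow> nat) \<Rightarrow> nat \<Rightarrow> nat" where
  "running_max w n = Max (w ` {..n})"

lemma running_max_0 [simp]: "running_max w 0 = w 0"
  by (simp add: running_max_def)

lemma le_running_max: "w n \<le> running_max w n"
  by (simp add: running_max_def)

lemma running_max_Suc: "running_max w (Suc n) = max (running_max w n) (w (Suc n))"
  by (simp add: running_max_def atMost_Suc max.commute)

lemma traj_step_with_max:
  "traj (step_with_max up) (0, 0) \<omega> n = (chain_path up \<omega> n, running_max (chain_path up \<omega>) n)"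
  by (induction n) (simp_all add: traj_Suc_last step_with_max_def running_max_Suc del: traj.simps(2))

lemma chain_path_Suc_cases:
  "chain_path up \<omega> (Suc n) = chain_path up \<omega> n + 1 \<or> chain_path up \<omega> (Suc n) + 1 = chain_path up \<omega> n"
  by (auto simp: step_def)

lemma tau_le_enat_iff: "tau k w \<le> enat n \<longleftrightarrow> (\<exists>m\<le>n. w m = k)"
proof (cases "\<exists>m. w m = k")
  case True
  then have "tau k w = enat (LEAST m. w m = k)"
    by (simp add: tau_def)
  moreover have "w (LEAST m. w m = k) = k"
    using True by (rule LeastI_ex)
  moreover have "(LEAST m. w m = k) \<le> m" if "w m = k" for m
    using that by (rule Least_le)
  ultimately show ?thesis
    by (metis enat_ord_simps(1) le_trans)
next
  case False
  then show ?thesis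
    by (simp add: tau_def)
qed

context
  fixes w :: "nat \<Rightarrow> nat"
  assumes start: "w 0 = 0" and steps: "\<And>n. w (Suc n) = w n + 1 \<or> w (Suc n) + 1 = w n"
begin

lemma hits_every_level_below: "k \<le> w n \<Longrightarrow> \<exists>m\<le>n. w m = k"
proof (induction n)
  case 0
  then show ?case
    using start by auto
next
  case (Suc n)
  show ?case
  proof (cases "w (Suc n) = k")
    case False
    with Suc.prems steps[of n] have "k \<le> w n"
      by auto
    then show ?thesis
      using Suc.IH le_Suc_eq by blast
  qed blast
qed

lemma ex_visit_iff_le_running_max: "(\<exists>m\<le>n. w m = k) \<longleftrightarrow> k \<le> running_max w n"
proof
  assume "\<exists>m\<le>n. w m = k"
  then show "k \<le> running_max w n"
    by (auto simp: running_max_def intro: Max_ge)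
next
  assume "k \<le> running_max w n"
  moreover have "running_max w n \<in> w ` {..n}"
    unfolding running_max_def by (rule Max_in) auto
  then obtain m where "m \<le> n" "running_max w n = w m"
    by auto
  ultimately obtain m' where "m' \<le> m" "w m' = k"
    using hits_every_level_below[of k m] by auto
  with \<open>m \<le> n\<close> show "\<exists>m\<le>n. w m = k"
    by (intro exI[of _ m']) auto
qed

lemma less_M_N_iff:
  assumes "2 \<le> N"
  shows "x < M_N N w \<longleftrightarrow> (\<exists>n. gap_exceeds N x (w n, running_max w n))"
proof -
  define X where "X = {log N (real k) - log N (real (w n)) | k n.
      1 \<le> k \<and> k \<le> N \<and> tau k w \<le> enat n \<and> enat n < tau (k + 1) w}"
  have level: "tau k w \<le> enat n \<and> enat n < tau (k + 1) w \<longleftrightarrow> k = running_max w n" for k n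
    unfolding not_le[symmetric] tau_le_enat_iff ex_visit_iff_le_running_max by auto
  have X: "X = {log N (real (running_max w n)) - log N (real (w n)) | n.
      1 \<le> running_max w n \<and> running_max w n \<le> N}"
    unfolding X_def level by auto
  have "w 1 = 1"
    using start steps[of 0] by auto
  then have "running_max w 1 = 1"
    using start by (simp add: running_max_Suc)
  then have "log N 1 - log N 1 \<in> X"
    unfolding X using assms \<open>w 1 = 1\<close> by (intro CollectI exI[of _ 1]) auto
  moreover have "bdd_above X"
  proof (rule bdd_aboveI)
    fix y
    assume "y \<in> X"
    then obtain n where n: "y = log N (real (running_max w n)) - log N (real (w n))"
      "1 \<le> running_max w n" "running_max w n \<le> N"
      unfolding X by blast
    have "log N (real (running_max w n)) \<le> log N (real N)"
      using n assms by (subst log_le_cancel_iff) auto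
    moreover have "0 \<le> log N (real (w n))"
      using assms by (cases "w n = 0") (auto simp: log_def)
    ultimately show "y \<le> 1"
      using n(1) assms by simp
  qed
  ultimately have "x < M_N N w \<longleftrightarrow> (\<exists>y\<in>X. x < y)"
    unfolding M_N_def X_def[symmetric] by (intro less_cSup_iff) auto
  then show ?thesis
    unfolding X gap_exceeds.simps by blast
qed

end

definition gap_threshold :: "nat \<Rightarrow> real \<Rightarrow> nat \<Rightarrow> nat" where
  "gap_threshold N x S = Max (insert 0 {v \<in> {1..S}. x < log N (real S) - log N (real v)})"

lemma gap_threshold_le: "gap_threshold N x S \<le> S"
  by (auto simp: gap_threshold_def intro!: Max.boundedI)

lemma gap_exceeds_iff_below_threshold:
  assumes "2 \<le> N" "w \<le> S"
  shows "gap_exceeds N x (w, S) \<longleftrightarrow> below_threshold N (gap_threshold N x) (w, S)"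
proof -
  define gap where "gap v \<longleftrightarrow> x < log N (real S) - log N (real v)" for v
  define b where "b = gap_threshold N x S"
  have b_in: "b \<in> insert 0 {v \<in> {1..S}. gap v}"
    unfolding b_def gap_threshold_def gap_def by (rule Max_in) auto
  have "gap v \<longleftrightarrow> v \<le> b" if "1 \<le> v" "v \<le> S" for v
  proof
    assume "gap v"
    with that show "v \<le> b"
      unfolding b_def gap_threshold_def gap_def by (intro Max_ge) auto
  next
    assume "v \<le> b"
    with that b_in have "gap b" "v \<le> b"
      by auto
    moreover have "log N (real v) \<le> log N (real b)"
      using \<open>v \<le> b\<close> that assms by simp
    ultimately show "gap v"
      by (simp add: gap_def)
  qed
  moreover have "gap w \<longleftrightarrow> gap (max w 1)"
    by (cases "w = 0") (simp_all add: gap_def log_def)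
  ultimately show ?thesis
    using assms by (cases "S = 0") (auto simp: gap_def b_def)
qed

lemma M_N_event_eq:
  assumes "2 \<le> N"
  shows "{\<omega> \<in> space noise. x < M_N N (chain_path up \<omega>)} =
    {\<omega> \<in> space (stream_space unif).
      \<exists>n. below_threshold N (gap_threshold N x) (traj (step_with_max up) (0, 0) \<omega> n)}"
proof -
  have "x < M_N N (chain_path up \<omega>) \<longleftrightarrow>
      (\<exists>n. below_threshold N (gap_threshold N x) (traj (step_with_max up) (0, 0) \<omega> n))" for \<omega>
    unfolding less_M_N_iff[of "chain_path up \<omega>", OF chain_path.simps(1) chain_path_Suc_cases assms]
    by (simp only: traj_step_with_max gap_exceeds_iff_below_threshold[OF assms le_running_max])
  then show ?thesis
    by (simp add: noise_def)
qed

section \<open>Averages of geometric sums\<close>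

definition power_mean :: "real \<Rightarrow> nat \<Rightarrow> real" where
  "power_mean r n = (\<Sum>i<n. r ^ i) / real n"

lemma one_minus_power_eq_mean: "1 - r ^ n = (1 - r) * (real n * power_mean r n)"
  by (cases "n = 0") (simp_all add: power_mean_def one_diff_power_eq)

lemma power_mean_pos: "0 < r \<Longrightarrow> 1 \<le> n \<Longrightarrow> 0 < power_mean r n"
  unfolding power_mean_def by (intro divide_pos_pos sum_pos) (auto simp: lessThan_empty_iff)

lemma power_sum_ge_geometric_mean:
  assumes "0 \<le> r"
  shows "(real n + 1) * sqrt (r ^ n) \<le> (\<Sum>i\<le>n. r ^ i)"
proof -
  have "(\<Sum>i\<le>n. sqrt (r ^ n)) \<le> (\<Sum>i\<le>n. (r ^ i + r ^ (n - i)) / 2)"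
  proof (rule sum_mono)
    fix i
    assume "i \<in> {..n}"
    then have "r ^ n = r ^ i * r ^ (n - i)"
      by (simp flip: power_add)
    then show "sqrt (r ^ n) \<le> (r ^ i + r ^ (n - i)) / 2"
      using assms arith_geo_mean_sqrt[of "r ^ i" "r ^ (n - i)"] by simp
  qed
  also have "(\<Sum>i\<le>n. r ^ (n - i)) = (\<Sum>i\<le>n. r ^ i)"
    using sum.nat_diff_reindex[of "\<lambda>i. r ^ i" "Suc n"] by (simp add: lessThan_Suc_atMost)
  then have "(\<Sum>i\<le>n. (r ^ i + r ^ (n - i)) / 2) = (\<Sum>i\<le>n. r ^ i)"
    by (simp add: sum.distrib flip: sum_divide_distrib)
  finally show ?thesis
    by (simp add: add.commute)
qed

lemma power_mean_log_convex:
  assumes "0 \<le> r" "1 \<le> n"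
  shows "power_mean r (Suc n) ^ 2 \<le> power_mean r n * power_mean r (Suc (Suc n))"
proof -
  define A where "A = (\<Sum>i<n. r ^ i)"
  define t where "t = r ^ n"
  define m where "m = real n + 1"
  have sums: "(\<Sum>i<Suc n. r ^ i) = A + t" "(\<Sum>i<Suc (Suc n). r ^ i) = A + t + r * t"
    by (simp_all add: A_def t_def)
  have "(1 - r) * A = 1 - t"
    by (simp add: A_def t_def one_diff_power_eq)
  moreover have "m\<^sup>2 * t \<le> (A + t)\<^sup>2"
  proof -
    have "m * sqrt t \<le> A + t"
      using power_sum_ge_geometric_mean[OF assms(1), of n] sums(1)
      by (simp add: m_def t_def lessThan_Suc_atMost)
    then have "(m * sqrt t)\<^sup>2 \<le> (A + t)\<^sup>2"
      using assms by (intro power_mono) (auto simp: m_def t_def)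
    then show ?thesis
      using assms by (simp add: power_mult_distrib t_def)
  qed
  moreover have "m\<^sup>2 * A * (A + t + r * t) - (m\<^sup>2 - 1) * (A + t)\<^sup>2
      = (A + t)\<^sup>2 - m\<^sup>2 * t + m\<^sup>2 * t * (1 - t - (1 - r) * A)"
    by algebra
  ultimately have "(m\<^sup>2 - 1) * (A + t)\<^sup>2 \<le> m\<^sup>2 * A * (A + t + r * t)"
    by simp
  moreover have "m\<^sup>2 - 1 = real n * (real n + 2)"
    by (simp add: m_def power2_eq_square algebra_simps)
  ultimately have "(A + t)\<^sup>2 * (real n * (real n + 2)) \<le> A * (A + t + r * t) * m\<^sup>2"
    by (simp add: algebra_simps)
  moreover have "0 < m\<^sup>2" "0 < real n * (real n + 2)"
    using assms by (simp_all add: m_def)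
  ultimately have "(A + t)\<^sup>2 / m\<^sup>2 \<le> A * (A + t + r * t) / (real n * (real n + 2))"
    by (simp add: pos_le_divide_eq pos_divide_le_eq)
  moreover have "power_mean r (Suc n) = (A + t) / m" "power_mean r n = A / real n"
    "power_mean r (Suc (Suc n)) = (A + t + r * t) / (real n + 2)"
    unfolding power_mean_def sums by (simp_all add: A_def m_def algebra_simps)
  ultimately show ?thesis
    by (simp add: power_divide)
qed

lemma power_mean_ratio_antimono:
  assumes "0 < r" "1 \<le> j" "j \<le> k"
  shows "power_mean r k / power_mean r (Suc k) \<le> power_mean r j / power_mean r (Suc j)"
  using assms(3)
proof (induction k rule: dec_induct)
  case (step k)
  have pos: "0 < power_mean r k" "0 < power_mean r (Suc k)" "0 < power_mean r (Suc (Suc k))"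
    using assms step by (simp_all add: power_mean_pos)
  have "power_mean r (Suc k) / power_mean r (Suc (Suc k)) \<le> power_mean r k / power_mean r (Suc k)"
    using power_mean_log_convex[of r k] assms step pos
    by (simp add: pos_le_divide_eq pos_divide_le_eq power2_eq_square mult_ac)
  with step.IH show ?case
    by simp
qed simp

lemma escape_prob_geometric_diagonal:
  assumes "0 < r" "r < 1" "b < k"
  defines "j \<equiv> k - b" and "P \<equiv> power_mean r"
  shows "escape_prob (\<lambda>n. 1 - r ^ n) k b k
    = escape_prob real k b k * ((P j / P (Suc j)) / (P k / P (Suc k)))"
proof -
  have j: "1 \<le> j" "j \<le> k" "k = b + j"
    using assms by (auto simp: j_def)
  have pos: "0 < P n" if "1 \<le> n" for n
    using assms that by (simp add: P_def power_mean_pos)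
  have shift: "r ^ b - r ^ (b + n) = r ^ b * (1 - r ^ n)" for n
    by (simp add: power_add right_diff_distrib)
  have factor_b: "r ^ b - r ^ k = r ^ b * ((1 - r) * (real j * P j))"
    "r ^ b - r ^ Suc k = r ^ b * ((1 - r) * (real (Suc j) * P (Suc j)))"
    unfolding P_def one_minus_power_eq_mean[symmetric] j(3) add_Suc_right[symmetric] by (rule shift)+
  have factor_0: "1 - r ^ Suc k = (1 - r) * (real (Suc k) * P (Suc k))"
    "1 - r ^ k = (1 - r) * (real k * P k)"
    unfolding P_def by (rule one_minus_power_eq_mean)+
  have cancel: "(c * (d * x)) * (d * y) / ((c * (d * z)) * (d * w)) = x * y / (z * w)"
    if "c \<noteq> 0" "d \<noteq> 0" for c d x y z w :: real
  proof -
    have "(c * (d * x)) * (d * y) = (c * d * d) * (x * y)" "(c * (d * z)) * (d * w) = (c * d * d) * (z * w)"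
      by (simp_all add: ac_simps)
    then show ?thesis
      using that by simp
  qed
  have "escape_prob (\<lambda>n. 1 - r ^ n) k b k
      = (r ^ b - r ^ k) * (1 - r ^ Suc k) / ((r ^ b - r ^ Suc k) * (1 - r ^ k))"
    by (simp add: escape_prob_def)
  also have "\<dots> = (r ^ b * ((1 - r) * (real j * P j))) * ((1 - r) * (real (Suc k) * P (Suc k)))
      / ((r ^ b * ((1 - r) * (real (Suc j) * P (Suc j)))) * ((1 - r) * (real k * P k)))"
    unfolding factor_b factor_0 ..
  also have "\<dots> = (real j * P j) * (real (Suc k) * P (Suc k)) / ((real (Suc j) * P (Suc j)) * (real k * P k))"
    using assms(1,2) by (simp add: cancel)
  also have "\<dots> = real j * (real k + 1) / ((real j + 1) * real k) * ((P j / P (Suc j)) / (P k / P (Suc k)))"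
    using pos[of k] pos[of "Suc k"] pos[of j] pos[of "Suc j"] j by (simp add: field_simps)
  also have "real j * (real k + 1) / ((real j + 1) * real k) = escape_prob real k b k"
    using assms by (simp add: escape_prob_def j_def of_nat_diff add_ac)
  finally show ?thesis .
qed

lemma escape_prob_linear_le_geometric:
  assumes "0 < r" "r < 1" "b \<le> k"
  shows "escape_prob real k b k \<le> escape_prob (\<lambda>n. 1 - r ^ n) k b k"
proof (cases "b = k")
  case False
  with assms have "b < k" "1 \<le> k - b" "k - b \<le> k"
    by auto
  have "0 < power_mean r k / power_mean r (Suc k)"
    using power_mean_pos[OF assms(1)] \<open>b < k\<close> by simp
  then have "1 \<le> (power_mean r (k - b) / power_mean r (Suc (k - b))) / (power_mean r k / power_mean r (Suc k))"
    using power_mean_ratio_antimono[OF assms(1) \<open>1 \<le> k - b\<close> \<open>k - b \<le> k\<close>]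
    by (subst le_divide_eq_1_pos)
  moreover have "0 \<le> escape_prob real k b k"
    using \<open>b < k\<close> by (simp add: escape_prob_def)
  ultimately show ?thesis
    unfolding escape_prob_geometric_diagonal[OF assms(1,2) \<open>b < k\<close>]
    using mult_left_mono by fastforce
qed (simp add: escape_prob_def)

section \<open>The two chains\<close>

lemma doob_walk_linear: "doob_walk (1 / 2) real"
  by unfold_locales (auto simp: strict_mono_def of_nat_diff field_simps)

lemma doob_up_linear: "doob_up (1 / 2) real = up_half"
  by (auto simp: doob_up_def up_half_def)

lemma doob_walk_geometric:
  assumes "1 / 2 < p" "p < 1"
  shows "doob_walk p (\<lambda>n. 1 - ((1 - p) / p) ^ n)"
proof
  define r where "r = (1 - p) / p"
  have r: "0 < r" "r < 1"
    using assms by (auto simp: r_def field_simps)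
  show "strict_mono (\<lambda>n. 1 - r ^ n)"
    using r by (auto intro!: strict_monoI power_strict_decreasing)
  fix k :: nat
  assume "1 \<le> k"
  then obtain m where k: "k = Suc m"
    by (cases k) auto
  have "p * (r * r) + (1 - p) = r"
    using assms by (simp add: r_def field_simps)
  then have "r ^ m * (p * (r * r) + (1 - p)) = r ^ m * r"
    by simp
  then show "p * (1 - r ^ Suc k) + (1 - p) * (1 - r ^ (k - 1)) = 1 - r ^ k"
    unfolding k by (simp add: algebra_simps)
qed (use assms in auto)

lemma doob_up_geometric: "0 < p \<Longrightarrow> doob_up p (\<lambda>n. 1 - ((1 - p) / p) ^ n) = up_p p"
  by (auto simp: doob_up_def up_p_def field_simps)

theorem corollaryA5:
  fixes p x :: real and N :: nat
  assumes "1/2 < p" and "p < 1" and "2 \<le> N"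
  shows "measure noise {us \<in> space noise. M_N N (chain_path (up_p p) us) > x}
         \<le> measure noise {us \<in> space noise. M_N N (chain_path up_half us) > x}"
proof -
  let ?h = "\<lambda>n. 1 - ((1 - p) / p) ^ n" and ?\<beta> = "gap_threshold N x"
  interpret P: threshold_walk p ?h N ?\<beta>
    using doob_walk_geometric[OF assms(1,2)] assms(3) gap_threshold_le
    by (simp add: threshold_walk_def threshold_walk_axioms_def)
  interpret H: threshold_walk "1 / 2" real N ?\<beta>
    using doob_walk_linear assms(3) gap_threshold_le
    by (simp add: threshold_walk_def threshold_walk_axioms_def)
  have "0 < (1 - p) / p" "(1 - p) / p < 1"
    using assms by (simp_all add: field_simps)
  then have survival_le: "H.survival (0, 0) \<le> P.survival (0, 0)"
    unfolding H.survival_start P.survival_start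
    using H.level_escape_bounds escape_prob_linear_le_geometric gap_threshold_le
    by (intro prod_mono) (simp add: H.level_escape_def P.level_escape_def)
  have drift: "1 + 1 / real N \<le> 2 * up_half w" if "1 \<le> w" "w \<le> N" for w
    using that by (simp add: up_half_def field_simps)
  have "measure noise {us \<in> space noise. M_N N (chain_path (up_p p) us) > x} \<le> 1 - P.survival (0, 0)"
    using P.hit_prob_le assms unfolding M_N_event_eq[OF assms(3)]
    by (simp add: noise_def doob_up_geometric)
  also have "\<dots> \<le> 1 - H.survival (0, 0)"
    using survival_le by simp
  also have "\<dots> \<le> measure noise {us \<in> space noise. M_N N (chain_path up_half us) > x}"
    using H.hit_prob_ge[of "1 / real N"] drift assms unfolding M_N_event_eq[OF assms(3)]
    by (simp add: noise_def doob_up_linear)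
  finally show ?thesis .
qed

end
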